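(* Let $k=p^\ell$ with $p$ a prime and $\ell>0$. For every $L\in\mathcal L_k$, the subgraph of $\mathcal F_k$ induced on $\phi_k^{-1}(L)$ is connected.
   Context: The vertex set $V$ consists of all reduced fractions $p/q$ with $p,q\in\mathbb Z$, $\gcd(p,q)=1$, together with $1/0$; here $p/q$ and $(-p)/(-q)$ denote the same vertex. For vertices define $d(p/q,a/b)=|pb-qa|$. The graph $\mathcal F_k$ has vertex set $V$, with an edge between $p/q$ and $a/b$ exactly when $d(p/q,a/b)=k$. An element $(a,b)\in(\mathbb Z/k\mathbb Z)^2$ is admissible if for $\lambda\in\mathbb Z/k\mathbb Z$, $(\lambda a,\lambda b)=0$ implies $\lambda=0$; $\mathcal L_k$ is the set of admissible elements modulo $v\sim\lambda v$ for units $\lambda\in(\mathbb Z/k\mathbb Z)^*$; $\phi_k:V\to\mathcal L_k$ sends $p/q$ to the class of $(p\bmod k,q\bmod k)$. *)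

theory Defs
  imports "HOL-Computational_Algebra.Primes"
begin

text \<open>Vertices: reduced fractions p/q (gcd(p,q)=1) including 1/0, where p/q and (-p)/(-q)
  are identified. We use the canonical representative with q > 0, or (p,q) = (1,0).\<close>
definition Fverts :: "(int \<times> int) set" where
  "Fverts = {(p, q). coprime p q \<and> (q > 0 \<or> (q = 0 \<and> p = 1))}"

definition fdist :: "int \<times> int \<Rightarrow> int \<times> int \<Rightarrow> int" where
  "fdist u v = \<bar>fst u * snd v - snd u * fst v\<bar>"

definition Fk_edge :: "int \<Rightarrow> int \<times> int \<Rightarrow> int \<times> int \<Rightarrow> bool" where
  "Fk_edge k u v \<longleftrightarrow> u \<in> Fverts \<and> v \<in> Fverts \<and> fdist u v = k"

text \<open>Z/kZ represented by {0..<k}.\<close>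
definition admissible :: "int \<Rightarrow> int \<times> int \<Rightarrow> bool" where
  "admissible k v \<longleftrightarrow> fst v \<in> {0..<k} \<and> snd v \<in> {0..<k} \<and>
     (\<forall>c\<in>{0..<k}. (c * fst v) mod k = 0 \<and> (c * snd v) mod k = 0 \<longrightarrow> c = 0)"

definition unit_equiv :: "int \<Rightarrow> int \<times> int \<Rightarrow> int \<times> int \<Rightarrow> bool" where
  "unit_equiv k v w \<longleftrightarrow> (\<exists>c\<in>{0..<k}. coprime c k \<and>
     w = ((c * fst v) mod k, (c * snd v) mod k))"

definition Lk :: "int \<Rightarrow> (int \<times> int) set set" where
  "Lk k = {{w. admissible k w \<and> unit_equiv k v w} | v. admissible k v}"

definition phik :: "int \<Rightarrow> int \<times> int \<Rightarrow> (int \<times> int) set" where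
  "phik k u = {w. admissible k w \<and> unit_equiv k (fst u mod k, snd u mod k) w}"

definition induced_connected :: "int \<Rightarrow> (int \<times> int) set \<Rightarrow> bool" where
  "induced_connected k S \<longleftrightarrow> S \<noteq> {} \<and>
     (\<forall>u\<in>S. \<forall>v\<in>S. (\<lambda>x y. x \<in> S \<and> y \<in> S \<and> Fk_edge k x y)\<^sup>*\<^sup>* u v)"

end

theory Submission
  imports Defs "HOL-Library.Product_Plus"
begin

text \<open>
  A vector v that is primitive modulo k (gcd(v1, v2, k) = 1) determines its class in L_k by the
  single congruence det(v, w) = 0 (mod k), where det(v, w) = v1 w2 - v2 w1; this holds for every
  modulus k.  Hence the fibre of phik through a vertex u consists of the vertices w with
  k dividing det(u, w).  For k = p^l an admissible vector has a coordinate prime to p, which makes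
  every class the image of a vertex.

  Connectivity of the fibre is a descent on |det(u, w)| / k.  Complete u to a basis (u, e) of Z^2
  with det(u, e) = 1 and write w = a u + m k e.  If |m| >= 2, choose n, c with a n - m c = 1,
  |n| < |m| and p not dividing c; this is possible because p does not divide a, so one of the
  solutions (n, c) and (n - m, c - a) works.  Then z = c u + n k e is primitive, lies in the fibre
  with det(u, z) = n k, and |det(z, w)| = k: the vertex +-z is adjacent to w and closer to u.
\<close>

lemma dvd_mod_diff_self: "k dvd a mod k - a" for a k :: int
  by (simp add: mod_eq_dvd_iff[symmetric])

lemma dvd_iff_if_dvd_diff: "k dvd a \<longleftrightarrow> k dvd b" if "k dvd a - b" for a b k :: int
  using dvd_add_right_iff[OF that, of b] by simp

lemma coprime_prime_power_if_not_dvd: "coprime a (P ^ l)" if "prime P" "\<not> P dvd a"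
  for a P :: int
  using that by (simp add: prime_imp_coprime coprime_commute)

lemma coprime_iff_exists_inverse_mod: "coprime a k \<longleftrightarrow> (\<exists>x. k dvd a * x - 1)"
  for a k :: int
proof
  assume "coprime a k"
  then obtain x y where "x * a + y * k = 1"
    using bezout_int[of a k] by auto
  then have "a * x - 1 = k * - y" by (simp add: algebra_simps)
  then show "\<exists>x. k dvd a * x - 1" by (metis dvd_triv_left)
next
  assume "\<exists>x. k dvd a * x - 1"
  then obtain x where x: "k dvd a * x - 1" ..
  show "coprime a k"
  proof (rule coprimeI)
    fix d assume d: "d dvd a" "d dvd k"
    have "d dvd a * x - (a * x - 1)"
      by (rule dvd_diff[OF dvd_mult2[OF d(1)] dvd_trans[OF d(2) x]])
    then show "is_unit d" by simp
  qed
qed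

lemma bezout_with_coeff_not_dvd:
  fixes a m P :: int
  assumes "prime P" "coprime a m" "\<not> P dvd a" "m \<ge> 2"
  obtains n c where "a * n - m * c = 1" "\<not> P dvd c" "\<bar>n\<bar> < m"
proof -
  obtain x where x: "m dvd a * x - 1"
    using assms(2) by (auto simp: coprime_iff_exists_inverse_mod)
  define n where "n = x mod m"
  have "a * n - 1 = (a * x - 1) - a * (x - x mod m)"
    by (simp add: n_def algebra_simps)
  also have "m dvd \<dots>"
    using x by (simp add: mod_eq_dvd_iff[symmetric])
  finally obtain c where c: "a * n - 1 = m * c" by (elim dvdE)
  have n: "0 \<le> n" "n < m" using assms(4) by (simp_all add: n_def)
  have "n \<noteq> 0"
  proof
    assume "n = 0"
    with c have "m * - c = 1" by simp
    then have "m dvd 1" using dvd_triv_left[of m "- c"] by simp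
    with assms(4) show False by (simp add: zdvd_imp_le)
  qed
  show thesis
  proof (cases "P dvd c")
    case False
    with c n show thesis by (intro that[of n c]) simp_all
  next
    case True
    have "\<not> P dvd c - a"
    proof
      assume "P dvd c - a"
      with True have "P dvd c - (c - a)" by (rule dvd_diff)
      with assms(3) show False by simp
    qed
    with c n \<open>n \<noteq> 0\<close> show thesis
      by (intro that[of "n - m" "c - a"]) (simp_all add: algebra_simps)
  qed
qed

section \<open>Determinants and primitive vectors\<close>

definition det :: "int \<times> int \<Rightarrow> int \<times> int \<Rightarrow> int" where
  "det u v = fst u * snd v - snd u * fst v"

definition primitive :: "int \<times> int \<Rightarrow> bool" where
  "primitive v \<longleftrightarrow> coprime (fst v) (snd v)"

definition primitive_mod :: "int \<Rightarrow> int \<times> int \<Rightarrow> bool" where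
  "primitive_mod k v \<longleftrightarrow> (\<exists>s t. k dvd s * fst v + t * snd v - 1)"

definition reduce_mod :: "int \<Rightarrow> int \<times> int \<Rightarrow> int \<times> int" where
  "reduce_mod k v = (fst v mod k, snd v mod k)"

lemma fdist_eq_abs_det: "fdist u v = \<bar>det u v\<bar>"
  by (simp add: fdist_def det_def)

lemma det_self [simp]: "det u u = 0"
  by (simp add: det_def)

lemma det_swap: "det v u = - det u v"
  by (simp add: det_def)

lemma dvd_det_commute: "k dvd det v u \<longleftrightarrow> k dvd det u v"
  by (metis det_swap dvd_minus_iff)

lemma det_uminus_left [simp]: "det (- u) v = - det u v"
  and det_uminus_right [simp]: "det u (- v) = - det u v"
  by (simp_all add: det_def)

lemma primitive_uminus [simp]: "primitive (- u) \<longleftrightarrow> primitive u"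
  by (simp add: primitive_def)

lemma dvd_det_reduce_mod_right [simp]: "k dvd det u (reduce_mod k v) \<longleftrightarrow> k dvd det u v"
proof (rule dvd_iff_if_dvd_diff)
  have "det u (reduce_mod k v) - det u v =
      fst u * (snd v mod k - snd v) - snd u * (fst v mod k - fst v)"
    by (simp add: det_def reduce_mod_def algebra_simps)
  then show "k dvd det u (reduce_mod k v) - det u v"
    by (simp add: dvd_diff dvd_mult dvd_mod_diff_self)
qed

lemma dvd_det_reduce_mod_left [simp]: "k dvd det (reduce_mod k u) v \<longleftrightarrow> k dvd det u v"
  using dvd_det_reduce_mod_right[of k v u] by (simp only: dvd_det_commute)

lemma primitive_imp_primitive_mod: "primitive v \<Longrightarrow> primitive_mod k v"
proof -
  assume "primitive v"
  then obtain s t where "s * fst v + t * snd v = 1"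
    using bezout_int[of "fst v" "snd v"] by (auto simp: primitive_def)
  then have "k dvd s * fst v + t * snd v - 1" by simp
  then show ?thesis unfolding primitive_mod_def by blast
qed

lemma primitive_mod_reduce_mod_iff [simp]: "primitive_mod k (reduce_mod k v) \<longleftrightarrow> primitive_mod k v"
proof -
  have "k dvd s * (fst v mod k) + t * (snd v mod k) - 1 \<longleftrightarrow> k dvd s * fst v + t * snd v - 1"
    for s t
  proof (rule dvd_iff_if_dvd_diff)
    have "s * (fst v mod k) + t * (snd v mod k) - 1 - (s * fst v + t * snd v - 1) =
        s * (fst v mod k - fst v) + t * (snd v mod k - snd v)"
      by (simp add: algebra_simps)
    also have "k dvd \<dots>"
      by (intro dvd_add dvd_mult dvd_mod_diff_self)
    finally show "k dvd s * (fst v mod k) + t * (snd v mod k) - 1 - (s * fst v + t * snd v - 1)" .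
  qed
  then show ?thesis by (simp add: primitive_mod_def reduce_mod_def)
qed

lemma dvd_det_trans:
  assumes "primitive_mod k u" "k dvd det u v" "k dvd det u w"
  shows "k dvd det v w"
proof -
  obtain s t where st: "k dvd s * fst u + t * snd u - 1"
    using assms(1) by (auto simp: primitive_mod_def)
  have "(s * fst u + t * snd u) * det v w =
      s * (fst v * det u w - fst w * det u v) + t * (snd v * det u w - snd w * det u v)"
    by (simp add: det_def algebra_simps)
  then have "k dvd (s * fst u + t * snd u) * det v w"
    using assms(2,3) by simp
  moreover have "k dvd (s * fst u + t * snd u - 1) * det v w"
    using st by simp
  ultimately have "k dvd (s * fst u + t * snd u) * det v w - (s * fst u + t * snd u - 1) * det v w"
    by (rule dvd_diff)
  then show ?thesis by (simp add: algebra_simps)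
qed

definition lincomb :: "int \<Rightarrow> int \<times> int \<Rightarrow> int \<Rightarrow> int \<times> int \<Rightarrow> int \<times> int" where
  "lincomb a u b e = (a * fst u + b * fst e, a * snd u + b * snd e)"

lemma det_lincomb_lincomb:
  "det (lincomb a u b e) (lincomb c u d e) = (a * d - b * c) * det u e"
  by (simp add: det_def lincomb_def algebra_simps)

lemma det_lincomb_right: "det u (lincomb a u b e) = b * det u e"
  and det_lincomb_left: "det (lincomb a u b e) e = a * det u e"
  by (simp_all add: det_def lincomb_def algebra_simps)

lemma lincomb_coordinates: "lincomb (det w e) u (det u w) e = w" if "det u e = 1"
proof -
  have "lincomb (det w e) u (det u w) e = (fst w * det u e, snd w * det u e)"
    by (simp add: det_def lincomb_def algebra_simps)
  with that show ?thesis by simp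
qed

lemma exists_det_eq_1: "\<exists>e. det u e = 1" if "primitive u"
proof -
  obtain s t where "s * fst u + t * snd u = gcd (fst u) (snd u)"
    using bezout_int by blast
  with that have "det u (- t, s) = 1"
    by (simp add: det_def primitive_def algebra_simps)
  then show ?thesis ..
qed

lemma primitive_lincomb_iff: "primitive (lincomb a u b e) \<longleftrightarrow> coprime a b" if "det u e = 1"
proof
  assume "primitive (lincomb a u b e)"
  then show "coprime a b"
    by (auto simp: primitive_def lincomb_def intro!: coprimeI elim!: coprime_common_divisor)
next
  assume ab: "coprime a b"
  show "primitive (lincomb a u b e)"
    unfolding primitive_def
  proof (rule coprimeI)
    fix d assume "d dvd fst (lincomb a u b e)" "d dvd snd (lincomb a u b e)"
    then have "d dvd det (lincomb a u b e) e" "d dvd det u (lincomb a u b e)"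
      by (simp_all add: det_def)
    with that have "d dvd a" "d dvd b"
      by (simp_all add: det_lincomb_left det_lincomb_right)
    with ab show "is_unit d" by (rule coprime_common_divisor)
  qed
qed

lemma primitive_det_eq_0:
  assumes "primitive u" "primitive w" "det u w = 0"
  shows "w = u \<or> w = - u"
proof -
  obtain e where e: "det u e = 1" using exists_det_eq_1 assms(1) by blast
  define a where "a = det w e"
  have w: "w = lincomb a u 0 e"
    using lincomb_coordinates[OF e, of w] assms(3) by (simp add: a_def)
  with assms(2) e have "\<bar>a\<bar> = 1"
    by (simp add: primitive_lincomb_iff)
  then have "a = 1 \<or> a = -1" by linarith
  with w show ?thesis by (auto simp: lincomb_def prod_eq_iff)
qed

section \<open>The classes of L_k\<close>

lemma admissible_imp_primitive_mod:
  assumes "admissible k v"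
  shows "primitive_mod k v"
proof -
  define g where "g = gcd (gcd (fst v) (snd v)) k"
  have k: "k > 0" using assms unfolding admissible_def by auto
  then have g: "g > 0" "g dvd k" "g dvd fst v" "g dvd snd v"
    by (auto simp: g_def intro: dvd_trans)
  have "g = 1"
  proof (rule ccontr)
    assume "g \<noteq> 1"
    with g have "g > 1" by simp
    obtain c where kc: "k = g * c" using g by (meson dvdE)
    then have c: "c \<in> {0..<k}" "c \<noteq> 0"
      using k \<open>g > 1\<close> by (auto simp: zero_less_mult_iff)
    have "k dvd c * fst v" "k dvd c * snd v"
      using g kc by (metis mult.commute mult_dvd_mono dvd_refl)+
    then have "c * fst v mod k = 0 \<and> c * snd v mod k = 0" by simp
    moreover have "\<forall>c\<in>{0..<k}. c * fst v mod k = 0 \<and> c * snd v mod k = 0 \<longrightarrow> c = 0"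
      using assms unfolding admissible_def by (elim conjE)
    ultimately show False using c by (meson bspec mp)
  qed
  obtain x y where xy: "x * fst v + y * snd v = gcd (fst v) (snd v)"
    using bezout_int by blast
  obtain a b where "a * gcd (fst v) (snd v) + b * k = 1"
    using bezout_int[of "gcd (fst v) (snd v)" k] \<open>g = 1\<close> by (auto simp: g_def)
  then have "(a * x) * fst v + (a * y) * snd v - 1 = k * (- b)"
    using xy by algebra
  then show ?thesis unfolding primitive_mod_def by (metis dvd_triv_left)
qed

lemma admissible_iff:
  "admissible k v \<longleftrightarrow> fst v \<in> {0..<k} \<and> snd v \<in> {0..<k} \<and> primitive_mod k v"
proof (intro iffI conjI)
  assume v: "fst v \<in> {0..<k} \<and> snd v \<in> {0..<k} \<and> primitive_mod k v"
  then obtain s t where st: "k dvd s * fst v + t * snd v - 1"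
    by (auto simp: primitive_mod_def)
  show "admissible k v"
    unfolding admissible_def
  proof (intro conjI ballI impI)
    fix c assume c: "c \<in> {0..<k}" "c * fst v mod k = 0 \<and> c * snd v mod k = 0"
    then have cv: "k dvd c * fst v" "k dvd c * snd v"
      by (simp_all add: mod_eq_0_iff_dvd)
    have "k dvd s * (c * fst v) + t * (c * snd v) - c * (s * fst v + t * snd v - 1)"
      by (rule dvd_diff[OF dvd_add[OF dvd_mult[OF cv(1)] dvd_mult[OF cv(2)]] dvd_mult[OF st]])
    also have "s * (c * fst v) + t * (c * snd v) - c * (s * fst v + t * snd v - 1) = c"
      by (simp add: algebra_simps)
    finally have "k dvd c" .
    have "\<not> 0 < c"
    proof
      assume "0 < c"
      with \<open>k dvd c\<close> have "k \<le> c" by (rule zdvd_imp_le)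
      with c(1) show False by simp
    qed
    with c(1) show "c = 0" by simp
  qed (use v in simp_all)
next
  assume adm: "admissible k v"
  then have "fst v \<in> {0..<k} \<and> snd v \<in> {0..<k}"
    unfolding admissible_def by (elim conjE) (rule conjI)
  then show "fst v \<in> {0..<k}" "snd v \<in> {0..<k}" by simp_all
  from adm show "primitive_mod k v" by (rule admissible_imp_primitive_mod)
qed

lemma admissible_reduce_mod: "admissible k (reduce_mod k v)" if "k > 0" "primitive_mod k v"
  using that by (simp add: admissible_iff) (simp add: reduce_mod_def)

definition Lk_class :: "int \<Rightarrow> int \<times> int \<Rightarrow> (int \<times> int) set" where
  "Lk_class k v = {w. admissible k w \<and> k dvd det v w}"

lemma unit_equiv_iff_dvd_det:
  assumes v: "primitive_mod k v" and w: "admissible k w"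
  shows "unit_equiv k v w \<longleftrightarrow> k dvd det v w"
proof
  assume "unit_equiv k v w"
  then obtain c where "w = reduce_mod k (c * fst v, c * snd v)"
    by (auto simp: unit_equiv_def reduce_mod_def)
  moreover have "det v (c * fst v, c * snd v) = 0"
    by (simp add: det_def)
  ultimately show "k dvd det v w" by simp
next
  assume det: "k dvd det v w"
  have k: "k > 0" using w by (auto simp: admissible_iff)
  obtain s t where st: "k dvd s * fst v + t * snd v - 1"
    using v by (auto simp: primitive_mod_def)
  define c where "c = s * fst w + t * snd w"
  have "fst w - c * fst v = - t * det v w - fst w * (s * fst v + t * snd v - 1)"
    by (simp add: c_def det_def algebra_simps)
  then have fst: "k dvd fst w - c * fst v" using st det by simp
  have "snd w - c * snd v = s * det v w - snd w * (s * fst v + t * snd v - 1)"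
    by (simp add: c_def det_def algebra_simps)
  then have snd: "k dvd snd w - c * snd v" using st det by simp
  obtain s' t' where st': "k dvd s' * fst w + t' * snd w - 1"
    using w by (auto simp: admissible_iff primitive_mod_def)
  have "c * (s' * fst v + t' * snd v) - 1 =
      (s' * fst w + t' * snd w - 1) - s' * (fst w - c * fst v) - t' * (snd w - c * snd v)"
    by (simp add: algebra_simps)
  also have "k dvd \<dots>"
    by (rule dvd_diff[OF dvd_diff[OF st' dvd_mult[OF fst]] dvd_mult[OF snd]])
  finally have "k dvd c * (s' * fst v + t' * snd v) - 1" .
  then have "coprime c k" unfolding coprime_iff_exists_inverse_mod ..
  then have "coprime (c mod k) k" using k by simp
  moreover have "fst w = (c mod k * fst v) mod k" "snd w = (c mod k * snd v) mod k"
  proof -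
    have "fst w mod k = fst w" "snd w mod k = snd w"
      using w by (simp_all add: admissible_iff)
    moreover have "fst w mod k = (c * fst v) mod k" "snd w mod k = (c * snd v) mod k"
      using fst snd by (simp_all only: mod_eq_dvd_iff)
    ultimately show "fst w = (c mod k * fst v) mod k" "snd w = (c mod k * snd v) mod k"
      by (simp_all only: mod_mult_left_eq)
  qed
  moreover have "c mod k \<in> {0..<k}" using k by simp
  ultimately show "unit_equiv k v w"
    unfolding unit_equiv_def by (metis prod.collapse)
qed

lemma phik_eq_Lk_class: "phik k u = Lk_class k u" if "primitive_mod k u"
proof -
  have "phik k u = {w. admissible k w \<and> unit_equiv k (reduce_mod k u) w}"
    by (simp add: phik_def reduce_mod_def)
  also have "\<dots> = Lk_class k u"
    using that by (auto simp: Lk_class_def unit_equiv_iff_dvd_det)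
  finally show ?thesis .
qed

lemma Lk_eq_Lk_class:
  assumes "L \<in> Lk k"
  obtains v where "admissible k v" "L = Lk_class k v"
proof -
  obtain v where v: "admissible k v" "L = {w. admissible k w \<and> unit_equiv k v w}"
    using assms by (auto simp: Lk_def)
  moreover have "primitive_mod k v" using v(1) by (simp add: admissible_iff)
  ultimately have "L = Lk_class k v"
    unfolding Lk_class_def by (auto simp: unit_equiv_iff_dvd_det)
  with v(1) show thesis by (rule that)
qed

lemma Lk_class_eq_iff:
  assumes "k > 0" "primitive_mod k u" "primitive_mod k v"
  shows "Lk_class k u = Lk_class k v \<longleftrightarrow> k dvd det u v"
proof
  assume "Lk_class k u = Lk_class k v"
  moreover have "reduce_mod k u \<in> Lk_class k u"
    using assms by (simp add: Lk_class_def admissible_reduce_mod)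
  ultimately have "reduce_mod k u \<in> Lk_class k v" by simp
  then have "k dvd det v u" by (simp add: Lk_class_def)
  then show "k dvd det u v" by (metis dvd_det_commute)
next
  assume "k dvd det u v"
  then have "k dvd det u w \<longleftrightarrow> k dvd det v w" for w
    using assms(2,3) dvd_det_trans[of k u v w] dvd_det_trans[of k v u w]
      dvd_det_commute[of k u v] by blast
  then show "Lk_class k u = Lk_class k v" by (simp add: Lk_class_def)
qed

lemma mem_Fverts_iff:
  "u \<in> Fverts \<longleftrightarrow> primitive u \<and> (snd u > 0 \<or> snd u = 0 \<and> fst u = 1)"
  by (cases u) (simp add: Fverts_def primitive_def)

lemma Fverts_primitive: "u \<in> Fverts \<Longrightarrow> primitive u"
  by (simp add: mem_Fverts_iff)

lemma uminus_not_in_Fverts: "u \<in> Fverts \<Longrightarrow> - u \<notin> Fverts"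
  by (auto simp: mem_Fverts_iff)

lemma primitive_in_Fverts_or_uminus:
  assumes "primitive u"
  obtains "u \<in> Fverts" | "- u \<in> Fverts"
proof (cases "snd u = 0")
  case True
  with assms have "fst u = 1 \<or> fst u = -1"
    by (auto simp: primitive_def)
  with True assms that show thesis by (auto simp: mem_Fverts_iff)
next
  case False
  with assms that show thesis by (cases "snd u > 0") (auto simp: mem_Fverts_iff)
qed

lemma Fverts_det_eq_0: "w = u" if "u \<in> Fverts" "w \<in> Fverts" "det u w = 0"
  using primitive_det_eq_0[of u w] uminus_not_in_Fverts that Fverts_primitive by blast

lemma phik_eq_iff:
  assumes "k > 0" "u \<in> Fverts" "w \<in> Fverts"
  shows "phik k w = phik k u \<longleftrightarrow> k dvd det u w"
proof -
  have "primitive_mod k u" "primitive_mod k w"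
    using assms by (simp_all add: Fverts_primitive primitive_imp_primitive_mod)
  then show ?thesis
    using assms(1) by (simp add: phik_eq_Lk_class Lk_class_eq_iff dvd_det_commute[of k w u])
qed

lemma fiber_eq_dvd_det:
  assumes "k > 0" "u \<in> Fverts" "phik k u = L"
  shows "{w \<in> Fverts. phik k w = L} = {w \<in> Fverts. k dvd det u w}"
proof -
  have "phik k w = L \<longleftrightarrow> k dvd det u w" if "w \<in> Fverts" for w
    using phik_eq_iff[OF assms(1,2) that] assms(3) by simp
  then show ?thesis by blast
qed

lemma exists_primitive_dvd_det:
  assumes "prime P" "k = P ^ l" "l > 0" "primitive_mod k v"
  obtains u where "primitive u" "k dvd det v u"
proof -
  obtain s t where st: "k dvd s * fst v + t * snd v - 1"
    using assms(4) by (auto simp: primitive_mod_def)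
  have "P dvd k" using assms(2,3) by simp
  then have "P dvd s * fst v + t * snd v - 1" using st by (rule dvd_trans)
  moreover have "P dvd s * fst v + t * snd v" if "P dvd fst v" "P dvd snd v"
    using that by simp
  ultimately have "P dvd 1" if "P dvd fst v" "P dvd snd v"
    using that dvd_diff[of P "s * fst v + t * snd v" "s * fst v + t * snd v - 1"] by simp
  then have "\<not> P dvd fst v \<or> \<not> P dvd snd v"
    using \<open>prime P\<close> not_prime_unit by blast
  then show thesis
  proof
    assume "\<not> P dvd fst v"
    then have "coprime (fst v) k"
      unfolding assms(2) by (rule coprime_prime_power_if_not_dvd[OF assms(1)])
    then obtain c where c: "k dvd fst v * c - 1" by (auto simp: coprime_iff_exists_inverse_mod)
    have "det v (1, c * snd v) = snd v * (fst v * c - 1)"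
      by (simp add: det_def algebra_simps)
    with c have "k dvd det v (1, c * snd v)" by simp
    then show thesis using that[of "(1, c * snd v)"] by (simp add: primitive_def)
  next
    assume "\<not> P dvd snd v"
    then have "coprime (snd v) k"
      unfolding assms(2) by (rule coprime_prime_power_if_not_dvd[OF assms(1)])
    then obtain c where c: "k dvd snd v * c - 1" by (auto simp: coprime_iff_exists_inverse_mod)
    have "det v (c * fst v, 1) = - fst v * (snd v * c - 1)"
      by (simp add: det_def algebra_simps)
    with c have "k dvd det v (c * fst v, 1)" by simp
    then show thesis using that[of "(c * fst v, 1)"] by (simp add: primitive_def)
  qed
qed

lemma phik_onto_Lk:
  assumes "prime P" "k = P ^ l" "l > 0" "L \<in> Lk k"
  obtains u where "u \<in> Fverts" "phik k u = L"
proof -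
  have k: "k > 0" unfolding assms(2) using prime_gt_0_int[OF assms(1)] by simp
  obtain v where v: "admissible k v" "L = Lk_class k v"
    using assms(4) by (rule Lk_eq_Lk_class)
  then have pv: "primitive_mod k v" by (simp add: admissible_iff)
  obtain u where u: "primitive u" "k dvd det v u"
    using exists_primitive_dvd_det[OF assms(1-3) pv] by blast
  obtain u' where u': "u' \<in> Fverts" "k dvd det v u'"
  proof (cases rule: primitive_in_Fverts_or_uminus[OF u(1)])
    case 1
    with u(2) show thesis by (intro that)
  next
    case 2
    with u(2) show thesis by (intro that[of "- u"]) simp_all
  qed
  then have "phik k u' = Lk_class k v"
    using k pv by (simp add: phik_eq_Lk_class Fverts_primitive primitive_imp_primitive_mod
        Lk_class_eq_iff dvd_det_commute[of k u' v])
  with u'(1) v(2) show thesis by (intro that) simp_all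
qed

section \<open>Descent\<close>

lemma descent_step:
  assumes P: "prime P" "k = P ^ l" "l > 0"
    and u: "primitive u" and w: "primitive w"
    and m: "det u w = m * k" "m \<ge> 2"
  obtains z n where "primitive z" "det u z = n * k" "\<bar>n\<bar> < m" "\<bar>det z w\<bar> = k"
proof -
  obtain e where e: "det u e = 1" using exists_det_eq_1 u by blast
  define a where "a = det w e"
  have "w = lincomb a u (m * k) e"
    using lincomb_coordinates[OF e, of w] m(1) by (simp add: a_def)
  with w e have "coprime a (m * k)" by (simp add: primitive_lincomb_iff)
  then have am: "coprime a m" and ak: "coprime a k" by simp_all
  have "\<not> P dvd a"
  proof
    assume "P dvd a"
    moreover have "P dvd k" using P(2,3) by simp
    ultimately have "is_unit P" by (rule coprime_common_divisor[OF ak])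
    with P(1) show False by (simp add: not_prime_unit)
  qed
  then obtain n c where nc: "a * n - m * c = 1" "\<not> P dvd c" "\<bar>n\<bar> < m"
    using bezout_with_coeff_not_dvd[OF P(1) am _ m(2)] by blast
  define z where "z = lincomb c u (n * k) e"
  have "coprime c n"
  proof (rule coprimeI)
    fix d assume "d dvd c" "d dvd n"
    then have "d dvd a * n - m * c" by simp
    with nc(1) show "is_unit d" by simp
  qed
  moreover have "coprime c k"
    using P nc(2) coprime_prime_power_if_not_dvd by blast
  ultimately have "primitive z"
    using e by (simp add: z_def primitive_lincomb_iff)
  moreover have "det u z = n * k"
    using e by (simp add: z_def det_lincomb_right)
  moreover have "\<bar>det z w\<bar> = k"
  proof -
    have "det z w = - k * (a * n - m * c)"
      using e \<open>w = lincomb a u (m * k) e\<close>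
      by (simp add: z_def det_lincomb_lincomb algebra_simps)
    moreover have "k > 0" unfolding P(2) using prime_gt_0_int[OF P(1)] by simp
    ultimately show ?thesis using nc(1) by simp
  qed
  ultimately show thesis using nc(3) that by blast
qed

lemma vertex_descent_step:
  assumes P: "prime P" "k = P ^ l" "l > 0"
    and u: "u \<in> Fverts" and w: "w \<in> Fverts"
    and q: "det u w = q * k" "\<bar>q\<bar> \<ge> 2"
  obtains z where "z \<in> Fverts" "k dvd det u z" "\<bar>det u z\<bar> < \<bar>det u w\<bar>" "\<bar>det z w\<bar> = k"
proof -
  have k: "k > 0" unfolding P(2) using prime_gt_0_int[OF P(1)] by simp
  obtain w' where w': "primitive w'" "det u w' = \<bar>q\<bar> * k" "\<And>x. \<bar>det x w'\<bar> = \<bar>det x w\<bar>"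
  proof (cases "q \<ge> 0")
    case True
    with q w show thesis by (intro that[of w]) (simp_all add: Fverts_primitive)
  next
    case False
    with q w show thesis by (intro that[of "- w"]) (simp_all add: Fverts_primitive)
  qed
  obtain z n where z: "primitive z" "det u z = n * k" "\<bar>n\<bar> < \<bar>q\<bar>" "\<bar>det z w'\<bar> = k"
    using descent_step[OF P Fverts_primitive[OF u] w'(1,2) q(2)] by blast
  have "\<bar>n\<bar> * k < \<bar>q\<bar> * k" using z(3) k by simp
  with q(1) z(2) have "\<bar>det u z\<bar> < \<bar>det u w\<bar>" using k by (simp add: abs_mult)
  show thesis
  proof (cases rule: primitive_in_Fverts_or_uminus[OF z(1)])
    case 1
    with z \<open>\<bar>det u z\<bar> < \<bar>det u w\<bar>\<close> w'(3)[of z] show thesis by (intro that[of z]) simp_all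
  next
    case 2
    with z \<open>\<bar>det u z\<bar> < \<bar>det u w\<bar>\<close> w'(3)[of z] show thesis
      by (intro that[of "- z"]) simp_all
  qed
qed

lemma reachable_in_fiber:
  assumes P: "prime P" "k = P ^ l" "l > 0" and u: "u \<in> Fverts"
    and S_def: "S \<equiv> {x \<in> Fverts. k dvd det u x}"
  shows "w \<in> Fverts \<Longrightarrow> k dvd det u w \<Longrightarrow>
    (\<lambda>x y. x \<in> S \<and> y \<in> S \<and> Fk_edge k x y)\<^sup>*\<^sup>* u w"
proof (induction "nat \<bar>det u w\<bar>" arbitrary: w rule: less_induct)
  case (less w)
  let ?R = "\<lambda>x y. x \<in> S \<and> y \<in> S \<and> Fk_edge k x y"
  have k: "k > 0" unfolding P(2) using prime_gt_0_int[OF P(1)] by simp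
  have uS: "u \<in> S" and wS: "w \<in> S" using u less.prems by (simp_all add: S_def)
  obtain q where q: "det u w = q * k" using less.prems(2) by (metis dvd_def mult.commute)
  consider "q = 0" | "\<bar>q\<bar> = 1" | "\<bar>q\<bar> \<ge> 2" by linarith
  then show ?case
  proof cases
    case 1
    with q u less.prems(1) have "w = u" by (simp add: Fverts_det_eq_0)
    then show ?thesis by simp
  next
    case 2
    with q k u less.prems(1) have "Fk_edge k u w"
      by (simp add: Fk_edge_def fdist_eq_abs_det abs_mult)
    with uS wS show ?thesis by (simp add: r_into_rtranclp)
  next
    case 3
    with P u less.prems(1) q obtain z where
      z: "z \<in> Fverts" "k dvd det u z" "\<bar>det u z\<bar> < \<bar>det u w\<bar>" "\<bar>det z w\<bar> = k"
      by (rule vertex_descent_step)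
    from z(3) have "?R\<^sup>*\<^sup>* u z" using z(1,2) by (intro less.hyps) simp_all
    moreover have "?R z w"
      using z wS by (simp add: S_def Fk_edge_def fdist_eq_abs_det less.prems)
    ultimately show ?thesis by (rule rtranclp.rtrancl_into_rtrancl)
  qed
qed

theorem proposition4p2:
  fixes p l :: nat and k :: int and L :: "(int \<times> int) set"
  assumes "prime p" and "l > 0" and "k = int (p ^ l)"
    and "L \<in> Lk k"
  shows "induced_connected k {u \<in> Fverts. phik k u = L}"
proof -
  have P: "prime (int p)" "k = int p ^ l" using assms(1,3) by simp_all
  have k: "k > 0" using assms(3) prime_gt_0_nat[OF assms(1)] by simp
  define F where "F = {u \<in> Fverts. phik k u = L}"
  obtain u0 where "u0 \<in> Fverts" "phik k u0 = L"
    using phik_onto_Lk[OF P assms(2,4)] by blast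
  then have "F \<noteq> {}" unfolding F_def by blast
  moreover have "(\<lambda>x y. x \<in> F \<and> y \<in> F \<and> Fk_edge k x y)\<^sup>*\<^sup>* u w" if "u \<in> F" "w \<in> F" for u w
  proof -
    from that(1) have u: "u \<in> Fverts" "phik k u = L" by (simp_all add: F_def)
    then have F_eq: "F = {x \<in> Fverts. k dvd det u x}"
      unfolding F_def by (rule fiber_eq_dvd_det[OF k])
    with that(2) have "w \<in> Fverts" "k dvd det u w" by simp_all
    then show ?thesis by (rule reachable_in_fiber[OF P assms(2) u(1) F_eq[THEN eq_reflection]])
  qed
  ultimately show ?thesis unfolding induced_connected_def F_def by blast
qed

end
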